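(* Let $B$ be a Lie algebra over a field $k$ satisfying $\Phi1$: $\forall x_1,\dots,x_4\ (x_1x_2)(x_3x_4)=0$, $\Phi2$: $\forall x,y\ (xyx=0\wedge xyy=0\to xy=0)$ and $\Phi3$: $\forall x,y,z\ (x\ne0\wedge xy=0\wedge xz=0\to yz=0)$. Then the set $\{b\in B: B\models \mathrm{Fit}(b)\}$, where $\mathrm{Fit}(x)\equiv\forall y\,(xyx=0)$, equals $\mathrm{Fit}(B)$. If moreover $B$ is an $F_r$-algebra, then the set $\{b\in B: bа_ib=0 \text{ for all } i=1,\dots,r\}$, i.e. the truth domain of $\mathrm{Fit}'(x)\equiv\bigwedge_{i=1}^r(xa_ix=0)$, also equals $\mathrm{Fit}(B)$.
   Context: Products are left-normed: $xyx=(xy)x$. $\mathrm{Fit}(B)$ is the sum of all nilpotent ideals of $B$. $F_r$ is the free metabelian Lie algebra over $k$ of rank $r\ge 2$ with free base $a_1,\dots,a_r$; an $F_r$-algebra is a Lie algebra containing a designated copy of $F_r$ (so $a_1,\dots,a_r\in B$). *)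

theory Defs
  imports Complex_Main
begin

(* A Lie algebra over a field 'k is represented by a type 'b (the whole algebra B)
   with a k-module structure "scale" and a bracket "br" (products left-normed:
   x y z = br (br x y) z). *)

definition lie_algebra :: "('k::field \<Rightarrow> 'b::ab_group_add \<Rightarrow> 'b) \<Rightarrow> ('b \<Rightarrow> 'b \<Rightarrow> 'b) \<Rightarrow> bool" where
  "lie_algebra scale br \<longleftrightarrow>
     module scale \<and>
     (\<forall>x y z. br (x + y) z = br x z + br y z) \<and>
     (\<forall>x y z. br x (y + z) = br x y + br x z) \<and>
     (\<forall>c x y. br (scale c x) y = scale c (br x y)) \<and>
     (\<forall>c x y. br x (scale c y) = scale c (br x y)) \<and>
     (\<forall>x. br x x = 0) \<and>
     (\<forall>x y z. br (br x y) z + br (br y z) x + br (br z x) y = 0)"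

definition lie_ideal :: "('k::field \<Rightarrow> 'b::ab_group_add \<Rightarrow> 'b) \<Rightarrow> ('b \<Rightarrow> 'b \<Rightarrow> 'b) \<Rightarrow> 'b set \<Rightarrow> bool" where
  "lie_ideal scale br I \<longleftrightarrow> module.subspace scale I \<and> (\<forall>x\<in>I. \<forall>y. br x y \<in> I)"

(* lower central series of a subspace I (viewed as a Lie algebra):
   I^1 = I, I^(n+1) = span [I^n, I]; index shifted to start at 0 *)
fun lower_central :: "('k::field \<Rightarrow> 'b::ab_group_add \<Rightarrow> 'b) \<Rightarrow> ('b \<Rightarrow> 'b \<Rightarrow> 'b) \<Rightarrow> 'b set \<Rightarrow> nat \<Rightarrow> 'b set" where
  "lower_central scale br I 0 = I"
| "lower_central scale br I (Suc n) =
     module.span scale {br x y | x y. x \<in> lower_central scale br I n \<and> y \<in> I}"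

definition nilpotent_ideal :: "('k::field \<Rightarrow> 'b::ab_group_add \<Rightarrow> 'b) \<Rightarrow> ('b \<Rightarrow> 'b \<Rightarrow> 'b) \<Rightarrow> 'b set \<Rightarrow> bool" where
  "nilpotent_ideal scale br I \<longleftrightarrow> lie_ideal scale br I \<and> (\<exists>n. lower_central scale br I n = {0})"

definition fitting :: "('k::field \<Rightarrow> 'b::ab_group_add \<Rightarrow> 'b) \<Rightarrow> ('b \<Rightarrow> 'b \<Rightarrow> 'b) \<Rightarrow> 'b set" where
  "fitting scale br = module.span scale (\<Union>{I. nilpotent_ideal scale br I})"

datatype 'k lterm = LVar nat | LZero | LAdd "'k lterm" "'k lterm" | LNeg "'k lterm"
  | LSmul 'k "'k lterm" | LBr "'k lterm" "'k lterm"

fun lvars :: "'k lterm \<Rightarrow> nat set" where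
  "lvars (LVar i) = {i}"
| "lvars LZero = {}"
| "lvars (LAdd s t) = lvars s \<union> lvars t"
| "lvars (LNeg t) = lvars t"
| "lvars (LSmul c t) = lvars t"
| "lvars (LBr s t) = lvars s \<union> lvars t"

fun leval :: "('k \<Rightarrow> 'b::ab_group_add \<Rightarrow> 'b) \<Rightarrow> ('b \<Rightarrow> 'b \<Rightarrow> 'b) \<Rightarrow> (nat \<Rightarrow> 'b) \<Rightarrow> 'k lterm \<Rightarrow> 'b" where
  "leval scale br a (LVar i) = a i"
| "leval scale br a LZero = 0"
| "leval scale br a (LAdd s t) = leval scale br a s + leval scale br a t"
| "leval scale br a (LNeg t) = - leval scale br a t"
| "leval scale br a (LSmul c t) = scale c (leval scale br a t)"
| "leval scale br a (LBr s t) = br (leval scale br a s) (leval scale br a t)"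

(* Equational theory of metabelian Lie algebras over 'k: the free metabelian Lie
   algebra on the variables is the term algebra modulo this congruence. *)
inductive meq :: "'k::field lterm \<Rightarrow> 'k lterm \<Rightarrow> bool" where
  refl: "meq t t"
| sym: "meq s t \<Longrightarrow> meq t s"
| trans: "meq s t \<Longrightarrow> meq t u \<Longrightarrow> meq s u"
| cong_add: "meq s s' \<Longrightarrow> meq t t' \<Longrightarrow> meq (LAdd s t) (LAdd s' t')"
| cong_neg: "meq s s' \<Longrightarrow> meq (LNeg s) (LNeg s')"
| cong_smul: "meq s s' \<Longrightarrow> meq (LSmul c s) (LSmul c s')"
| cong_br: "meq s s' \<Longrightarrow> meq t t' \<Longrightarrow> meq (LBr s t) (LBr s' t')"
| add_assoc: "meq (LAdd (LAdd s t) u) (LAdd s (LAdd t u))"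
| add_comm: "meq (LAdd s t) (LAdd t s)"
| add_zero: "meq (LAdd t LZero) t"
| add_neg: "meq (LAdd t (LNeg t)) LZero"
| smul_add_scalar: "meq (LSmul (c + d) t) (LAdd (LSmul c t) (LSmul d t))"
| smul_add_vec: "meq (LSmul c (LAdd s t)) (LAdd (LSmul c s) (LSmul c t))"
| smul_mult: "meq (LSmul (c * d) t) (LSmul c (LSmul d t))"
| smul_one: "meq (LSmul 1 t) t"
| br_add_left: "meq (LBr (LAdd s t) u) (LAdd (LBr s u) (LBr t u))"
| br_add_right: "meq (LBr u (LAdd s t)) (LAdd (LBr u s) (LBr u t))"
| br_smul_left: "meq (LBr (LSmul c s) t) (LSmul c (LBr s t))"
| br_smul_right: "meq (LBr s (LSmul c t)) (LSmul c (LBr s t))"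
| br_alt: "meq (LBr t t) LZero"
| jacobi: "meq (LAdd (LAdd (LBr (LBr s t) u) (LBr (LBr t u) s)) (LBr (LBr u s) t)) LZero"
| metabelian: "meq (LBr (LBr s t) (LBr u v)) LZero"

(* B is an F_r-algebra with designated free base a 1, ..., a r of the copy of F_r:
   the subalgebra generated by a 1..a r is the free metabelian Lie algebra on them,
   i.e. two Lie terms in variables 1..r agree at (a 1,...,a r) iff they are equal
   in the free metabelian Lie algebra F_r. *)
definition fr_algebra :: "('k::field \<Rightarrow> 'b::ab_group_add \<Rightarrow> 'b) \<Rightarrow> ('b \<Rightarrow> 'b \<Rightarrow> 'b) \<Rightarrow> nat \<Rightarrow> (nat \<Rightarrow> 'b) \<Rightarrow> bool" where
  "fr_algebra scale br r a \<longleftrightarrow>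
     (\<forall>s t :: 'k lterm. lvars s \<subseteq> {1..r} \<longrightarrow> lvars t \<subseteq> {1..r} \<longrightarrow>
        (leval scale br a s = leval scale br a t \<longleftrightarrow> meq s t))"

end

theory Submission
  imports Defs
begin

text \<open>Both truth domains coincide with the centralizer C of the derived algebra [B,B].
  By \<open>\<Phi>3\<close>, applied to the nonzero element b y, which annihilates b by \<open>Fit(b)\<close> and
  annihilates [B,B] by \<open>\<Phi>1\<close>, every b with \<open>Fit(b)\<close> centralizes [B,B] unless b y = 0 for all y;
  conversely elements of C satisfy \<open>Fit\<close> by anticommutativity. Each x \<in> C spans together with
  [B,B] an abelian ideal, so C \<subseteq> Fit(B). For the reverse inclusion, x in a nilpotent ideal kills
  x y after finitely many applications of ad x, and \<open>\<Phi>2\<close> together with \<open>\<Phi>1\<close> lets one peel these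
  applications off one at a time, giving x y x = 0. For \<open>Fit'\<close> the only new case is b \<noteq> 0 with
  b a_i = 0 for all i; then \<open>\<Phi>3\<close> forces a_1 a_2 = 0, which fails in the free metabelian algebra.\<close>

definition derived_centralizer :: "('b::ab_group_add \<Rightarrow> 'b \<Rightarrow> 'b) \<Rightarrow> 'b set" where
  "derived_centralizer br = {x. \<forall>p q. br x (br p q) = 0}"

locale lie_alg =
  fixes scale :: "'k::field \<Rightarrow> 'b::ab_group_add \<Rightarrow> 'b" and br :: "'b \<Rightarrow> 'b \<Rightarrow> 'b"
  assumes lie: "lie_algebra scale br"
begin

sublocale module scale
  using lie unfolding lie_algebra_def by blast

lemma br_add_left: "br (x + y) z = br x z + br y z"
  and br_add_right: "br x (y + z) = br x y + br x z"
  and br_scale_left: "br (scale c x) y = scale c (br x y)"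
  and br_scale_right: "br x (scale c y) = scale c (br x y)"
  and br_self [simp]: "br x x = 0"
  using lie unfolding lie_algebra_def by auto

lemma br_zero_left [simp]: "br 0 y = 0"
  using br_add_left[of 0 0 y] by simp

lemma br_zero_right [simp]: "br y 0 = 0"
  using br_add_right[of y 0 0] by simp

lemma br_anticomm: "br x y = - br y x"
proof -
  have "0 = br (x + y) (x + y)" by simp
  also have "\<dots> = (br x x + br y x) + (br x y + br y y)"
    by (simp only: br_add_left br_add_right)
  also have "\<dots> = br x y + br y x" by simp
  finally have "br x y + br y x = 0" by (rule HOL.sym)
  then show ?thesis by (simp add: eq_neg_iff_add_eq_0)
qed

lemma subspace_br_annihilator: "subspace {v. br u v = 0}"
  by (rule subspaceI) (auto simp: br_add_right br_scale_right)

lemma subspace_br_left_annihilator: "subspace {u. \<forall>v\<in>V. br u v = 0}"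
  by (rule subspaceI) (auto simp: br_add_left br_scale_left)

lemma nilpotent_ideal_if_abelian:
  assumes "lie_ideal scale br I" and "\<forall>u\<in>I. \<forall>v\<in>I. br u v = 0"
  shows "nilpotent_ideal scale br I"
proof -
  have "{br u v |u v. u \<in> I \<and> v \<in> I} \<subseteq> {0}"
    using assms(2) by auto
  then have "lower_central scale br I 1 \<subseteq> {0}"
    by (simp add: span_minimal subspace_0)
  moreover have "0 \<in> lower_central scale br I 1"
    by (simp add: span_zero)
  ultimately have "lower_central scale br I 1 = {0}"
    by blast
  with assms(1) show ?thesis
    unfolding nilpotent_ideal_def by blast
qed

lemma funpow_br_in_lower_central:
  assumes "w \<in> I" and "x \<in> I"
  shows "((\<lambda>v. br v x) ^^ n) w \<in> lower_central scale br I n"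
  using assms by (induction n) (auto intro!: span_base)

text \<open>This is where \<open>\<Phi>2\<close> enters: if u is a bracket, then (u x) u = 0 by \<open>\<Phi>1\<close>, so
  \<open>\<Phi>2\<close> reduces u x = 0 to (u x) x = 0, and the latter is again of the same shape.\<close>

lemma br_eq_0_if_funpow_br_eq_0:
  assumes Phi1: "\<forall>x1 x2 x3 x4. br (br x1 x2) (br x3 x4) = 0"
    and Phi2: "\<forall>x y. br (br x y) x = 0 \<and> br (br x y) y = 0 \<longrightarrow> br x y = 0"
    and "((\<lambda>v. br v x) ^^ n) (br p q) = 0"
  shows "br (br p q) x = 0"
  using assms(3)
proof (induction n arbitrary: p q)
  case 0
  then show ?case by simp
next
  case (Suc n)
  then have "br (br (br p q) x) x = 0"
    by (simp add: funpow_Suc_right del: funpow.simps)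
  moreover have "br (br (br p q) x) (br p q) = 0"
    using Phi1 by blast
  ultimately show ?case
    using Phi2 by blast
qed

lemma nilpotent_ideal_Fit:
  assumes Phi1: "\<forall>x1 x2 x3 x4. br (br x1 x2) (br x3 x4) = 0"
    and Phi2: "\<forall>x y. br (br x y) x = 0 \<and> br (br x y) y = 0 \<longrightarrow> br x y = 0"
    and I: "nilpotent_ideal scale br I" and "x \<in> I"
  shows "br (br x y) x = 0"
proof -
  obtain n where n: "lower_central scale br I n = {0}"
    using I unfolding nilpotent_ideal_def by blast
  have "br x y \<in> I"
    using I \<open>x \<in> I\<close> unfolding nilpotent_ideal_def lie_ideal_def by blast
  then have "((\<lambda>v. br v x) ^^ n) (br x y) = 0"
    using funpow_br_in_lower_central[OF _ \<open>x \<in> I\<close>, of "br x y" n] n by simp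
  then show ?thesis
    using br_eq_0_if_funpow_br_eq_0[OF Phi1 Phi2] by blast
qed

lemma subspace_derived_centralizer: "subspace (derived_centralizer br)"
  by (rule subspaceI) (auto simp: derived_centralizer_def br_add_left br_scale_left)

lemma derived_centralizer_Fit:
  assumes "x \<in> derived_centralizer br"
  shows "br (br x y) x = 0"
  using assms br_anticomm[of "br x y" x] by (simp add: derived_centralizer_def)

lemma derived_centralizer_if_Fit_witness:
  assumes Phi1: "\<forall>x1 x2 x3 x4. br (br x1 x2) (br x3 x4) = 0"
    and Phi3: "\<forall>x y z. x \<noteq> 0 \<and> br x y = 0 \<and> br x z = 0 \<longrightarrow> br y z = 0"
    and "br b y \<noteq> 0" and "br (br b y) b = 0"
  shows "b \<in> derived_centralizer br"
  using assms unfolding derived_centralizer_def by blast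

lemma Fit_iff_derived_centralizer:
  assumes Phi1: "\<forall>x1 x2 x3 x4. br (br x1 x2) (br x3 x4) = 0"
    and Phi3: "\<forall>x y z. x \<noteq> 0 \<and> br x y = 0 \<and> br x z = 0 \<longrightarrow> br y z = 0"
  shows "(\<forall>y. br (br b y) b = 0) \<longleftrightarrow> b \<in> derived_centralizer br"
proof
  assume Fit: "\<forall>y. br (br b y) b = 0"
  show "b \<in> derived_centralizer br"
  proof (cases "\<exists>y. br b y \<noteq> 0")
    case True
    then show ?thesis
      using Fit derived_centralizer_if_Fit_witness[OF Phi1 Phi3] by blast
  qed (auto simp: derived_centralizer_def)
qed (simp add: derived_centralizer_Fit)

lemma derived_centralizer_subset_fitting:
  assumes Phi1: "\<forall>x1 x2 x3 x4. br (br x1 x2) (br x3 x4) = 0"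
  shows "derived_centralizer br \<subseteq> fitting scale br"
proof
  fix x assume x: "x \<in> derived_centralizer br"
  define I where "I = span (insert x {br p q |p q. True})"
  have "x \<in> I"
    unfolding I_def by (simp add: span_base)
  have ideal: "lie_ideal scale br I"
    unfolding lie_ideal_def I_def by (auto intro: span_base)
  have generators_central: "\<forall>v\<in>I. br u v = 0" if "u \<in> insert x {br p q |p q. True}" for u
  proof -
    have "insert x {br p q |p q. True} \<subseteq> {v. br u v = 0}"
      using that x Phi1 br_anticomm[of _ x] by (auto simp: derived_centralizer_def)
    then show ?thesis
      using span_minimal[OF _ subspace_br_annihilator] unfolding I_def by blast
  qed
  have "span (insert x {br p q |p q. True}) \<subseteq> {u. \<forall>v\<in>I. br u v = 0}"
    by (rule span_minimal[OF _ subspace_br_left_annihilator]) (use generators_central in blast)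
  then have "\<forall>u\<in>I. \<forall>v\<in>I. br u v = 0"
    unfolding I_def[symmetric] by blast
  then have "nilpotent_ideal scale br I"
    using nilpotent_ideal_if_abelian[OF ideal] by blast
  with \<open>x \<in> I\<close> show "x \<in> fitting scale br"
    unfolding fitting_def by (blast intro: span_base)
qed

lemma fitting_subset_derived_centralizer:
  assumes Phi1: "\<forall>x1 x2 x3 x4. br (br x1 x2) (br x3 x4) = 0"
    and Phi2: "\<forall>x y. br (br x y) x = 0 \<and> br (br x y) y = 0 \<longrightarrow> br x y = 0"
    and Phi3: "\<forall>x y z. x \<noteq> 0 \<and> br x y = 0 \<and> br x z = 0 \<longrightarrow> br y z = 0"
  shows "fitting scale br \<subseteq> derived_centralizer br"
  unfolding fitting_def
proof (rule span_minimal[OF _ subspace_derived_centralizer])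
  show "\<Union>{I. nilpotent_ideal scale br I} \<subseteq> derived_centralizer br"
    using nilpotent_ideal_Fit[OF Phi1 Phi2] Fit_iff_derived_centralizer[OF Phi1 Phi3] by blast
qed

end

text \<open>Evaluation in the three-dimensional Heisenberg algebra over k, with bracket
  [(a,b,c),(a',b',c')] = (0,0,ab'-a'b), sending variables 1 and 2 to its first two basis vectors.\<close>

fun heisenberg_eval :: "'k::field lterm \<Rightarrow> 'k \<times> 'k \<times> 'k" where
  "heisenberg_eval (LVar i) = (if i = 1 then (1,0,0) else if i = 2 then (0,1,0) else (0,0,0))"
| "heisenberg_eval LZero = (0,0,0)"
| "heisenberg_eval (LAdd s t) =
     (case heisenberg_eval s of (a,b,c) \<Rightarrow> case heisenberg_eval t of (a',b',c') \<Rightarrow> (a+a',b+b',c+c'))"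
| "heisenberg_eval (LNeg t) = (case heisenberg_eval t of (a,b,c) \<Rightarrow> (-a,-b,-c))"
| "heisenberg_eval (LSmul k t) = (case heisenberg_eval t of (a,b,c) \<Rightarrow> (k*a,k*b,k*c))"
| "heisenberg_eval (LBr s t) =
     (case heisenberg_eval s of (a,b,c) \<Rightarrow> case heisenberg_eval t of (a',b',c') \<Rightarrow> (0,0,a*b'-a'*b))"

lemma heisenberg_eval_meq: "meq s t \<Longrightarrow> heisenberg_eval s = heisenberg_eval t"
  by (induction rule: meq.induct) (auto split: prod.splits simp: algebra_simps)

lemma not_meq_br_var1_var2: "\<not> meq (LBr (LVar 1) (LVar 2) :: 'k::field lterm) LZero"
proof
  assume "meq (LBr (LVar 1) (LVar 2) :: 'k lterm) LZero"
  then have "heisenberg_eval (LBr (LVar 1) (LVar 2) :: 'k lterm) = heisenberg_eval LZero"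
    by (rule heisenberg_eval_meq)
  then show False by simp
qed

lemma fr_algebra_br_generators_neq_0:
  fixes scale :: "'k::field \<Rightarrow> 'b::ab_group_add \<Rightarrow> 'b"
  assumes "fr_algebra scale br r a" and "2 \<le> r"
  shows "br (a 1) (a 2) \<noteq> 0"
proof
  assume "br (a 1) (a 2) = 0"
  then have "leval scale br a (LBr (LVar 1) (LVar 2) :: 'k lterm) = leval scale br a LZero"
    by simp
  moreover have "lvars (LBr (LVar 1) (LVar 2) :: 'k lterm) \<subseteq> {1..r}"
    using assms(2) by auto
  ultimately have "meq (LBr (LVar 1) (LVar 2) :: 'k lterm) LZero"
    using assms(1) unfolding fr_algebra_def by (metis empty_subsetI lvars.simps(2))
  then show False
    using not_meq_br_var1_var2 by blast
qed

lemma (in lie_alg) Fit'_subset_derived_centralizer: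
  assumes Phi1: "\<forall>x1 x2 x3 x4. br (br x1 x2) (br x3 x4) = 0"
    and Phi3: "\<forall>x y z. x \<noteq> 0 \<and> br x y = 0 \<and> br x z = 0 \<longrightarrow> br y z = 0"
    and F: "fr_algebra scale br r a" and "2 \<le> r"
  shows "{b. \<forall>i\<in>{1..r}. br (br b (a i)) b = 0} \<subseteq> derived_centralizer br"
proof
  fix b assume "b \<in> {b. \<forall>i\<in>{1..r}. br (br b (a i)) b = 0}"
  then have Fit': "\<forall>i\<in>{1..r}. br (br b (a i)) b = 0" by simp
  consider (witness) i where "i \<in> {1..r}" "br b (a i) \<noteq> 0"
    | (zero) "b = 0"
    | (annihilates) "b \<noteq> 0" "br b (a 1) = 0" "br b (a 2) = 0"
    using \<open>2 \<le> r\<close> by (metis atLeastAtMost_iff one_le_numeral order_refl Suc_1 Suc_le_eq le_less)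
  then show "b \<in> derived_centralizer br"
  proof cases
    case witness
    then show ?thesis
      using Fit' derived_centralizer_if_Fit_witness[OF Phi1 Phi3] by blast
  next
    case zero
    then show ?thesis by (simp add: derived_centralizer_def)
  next
    case annihilates
    then have "br (a 1) (a 2) = 0" using Phi3 by blast
    with fr_algebra_br_generators_neq_0[OF F \<open>2 \<le> r\<close>] show ?thesis by blast
  qed
qed

theorem lemma3p3:
  fixes scale :: "'k::field \<Rightarrow> 'b::ab_group_add \<Rightarrow> 'b" and br :: "'b \<Rightarrow> 'b \<Rightarrow> 'b"
  assumes lie: "lie_algebra scale br"
    and Phi1: "\<forall>x1 x2 x3 x4. br (br x1 x2) (br x3 x4) = 0"
    and Phi2: "\<forall>x y. br (br x y) x = 0 \<and> br (br x y) y = 0 \<longrightarrow> br x y = 0"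
    and Phi3: "\<forall>x y z. x \<noteq> 0 \<and> br x y = 0 \<and> br x z = 0 \<longrightarrow> br y z = 0"
  shows "{b. \<forall>y. br (br b y) b = 0} = fitting scale br \<and>
         (\<forall>r a. 2 \<le> r \<and> fr_algebra scale br r a \<longrightarrow>
            {b. \<forall>i\<in>{1..r}. br (br b (a i)) b = 0} = fitting scale br)"
proof -
  interpret lie_alg scale br by (rule lie_alg.intro[OF lie])
  have fitting_eq: "fitting scale br = derived_centralizer br"
    using derived_centralizer_subset_fitting[OF Phi1]
      fitting_subset_derived_centralizer[OF Phi1 Phi2 Phi3] by blast
  have Fit_eq: "{b. \<forall>y. br (br b y) b = 0} = derived_centralizer br"
    using Fit_iff_derived_centralizer[OF Phi1 Phi3] by blast
  have "{b. \<forall>i\<in>{1..r}. br (br b (a i)) b = 0} = derived_centralizer br"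
    if "2 \<le> r" "fr_algebra scale br r a" for r a
    using Fit'_subset_derived_centralizer[OF Phi1 Phi3 that(2,1)] Fit_eq by blast
  with fitting_eq Fit_eq show ?thesis by blast
qed

end
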